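(* Let $n\ge2$, let $\Omega$ be homogeneous of degree zero and integrable on $S^{n-1}$, and let $b\in C_0^\infty(\mathbb{R}^n)$. Then there is a constant $C$ (depending on $n$, $\Omega$, $b$) such that for all $l\in\mathbb{N}$, all $j_0\in\mathbb{Z}_-$, all $f$ and all $x\in\mathbb{R}^n$, $$\big|\widetilde{\mathcal{M}}^{l,j_0}_{\Omega,b}f(x)-\widetilde{\mathcal{M}}^l_{\Omega,b}f(x)\big|\le C\,2^{j_0}MM_\Omega f(x).$$
   Context: For $t\in[1,2]$, $j\in\mathbb{Z}$: $K^j_t(x)=2^{-j}\frac{\Omega(x)}{|x|^{n-1}}\chi_{\{2^{j-1}t<|x|\le2^jt\}}(x)$. $\phi\in C_0^\infty(\mathbb{R}^n)$ is nonnegative, $\int\phi=1$, $\mathrm{supp}\,\phi\subset\{|x|\le1/4\}$, $\phi_l(y)=2^{-nl}\phi(2^{-l}y)$. Let $F^l_{j,b}f(x,t)=\int_{\mathbb{R}^n}(b(x)-b(y))K^j_t*\phi_{j-l}(x-y)f(y)\,dy$, $\widetilde{\mathcal{M}}^l_{\Omega,b}f(x)=\big(\int_1^2\sum_{j\in\mathbb{Z}}|F^l_{j,b}f(x,t)|^2dt\big)^{1/2}$ and $\widetilde{\mathcal{M}}^{l,j_0}_{\Omega,b}f(x)=\big(\int_1^2\sum_{j\in\mathbb{Z},\,j>j_0}|F^l_{j,b}f(x,t)|^2dt\big)^{1/2}$. $M$ is the Hardy–Littlewood maximal operator and $M_\Omega h(x)=\sup_{r>0}\frac{1}{|B(x,r)|}\int_{B(x,r)}|\Omega(x-y)h(y)|\,dy$.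 $\mathbb{Z}_-$ denotes the negative integers. *)

theory Defs
  imports "HOL-Analysis.Analysis"
begin

fun iter_dderiv :: "'a::euclidean_space list \<Rightarrow> ('a \<Rightarrow> real) \<Rightarrow> 'a \<Rightarrow> real" where
  "iter_dderiv [] f = f"
| "iter_dderiv (v # vs) f = (\<lambda>x. frechet_derivative (iter_dderiv vs f) (at x) v)"

definition smooth_fun :: "('a::euclidean_space \<Rightarrow> real) \<Rightarrow> bool" where
  "smooth_fun f \<longleftrightarrow> (\<forall>vs x. iter_dderiv vs f differentiable (at x))"

definition C0_infty :: "('a::euclidean_space \<Rightarrow> real) \<Rightarrow> bool" where
  "C0_infty f \<longleftrightarrow> smooth_fun f \<and> compact (closure {x. f x \<noteq> 0})"

text \<open>Standard (cone) construction: sigma(A) = n * |{r theta : 0 < r \<le> 1, theta \<in> A}|.\<close>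
definition sphere_measure :: "'a::euclidean_space measure" where
  "sphere_measure = density
     (distr (restrict_space lborel (cball 0 1 - {0})) borel (\<lambda>x. x /\<^sub>R norm x))
     (\<lambda>_. ennreal (real DIM('a)))"

definition Kjt :: "(real^'n \<Rightarrow> real) \<Rightarrow> int \<Rightarrow> real \<Rightarrow> real^'n \<Rightarrow> real" where
  "Kjt \<Omega> j t x = (2 powr (- real_of_int j)) * \<Omega> x / norm x ^ (CARD('n) - 1)
     * indicator {y. 2 powr (real_of_int j - 1) * t < norm y \<and> norm y \<le> 2 powr (real_of_int j) * t} x"

definition phi_sc :: "(real^'n \<Rightarrow> real) \<Rightarrow> int \<Rightarrow> real^'n \<Rightarrow> real" where
  "phi_sc \<phi> l y = 2 powr (- real CARD('n) * real_of_int l) * \<phi> ((2 powr (- real_of_int l)) *\<^sub>R y)"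

definition Kconv :: "(real^'n \<Rightarrow> real) \<Rightarrow> (real^'n \<Rightarrow> real) \<Rightarrow> nat \<Rightarrow> int \<Rightarrow> real \<Rightarrow> real^'n \<Rightarrow> real" where
  "Kconv \<Omega> \<phi> l j t z = (LINT w|lborel. Kjt \<Omega> j t (z - w) * phi_sc \<phi> (j - int l) w)"

definition Fljb :: "(real^'n \<Rightarrow> real) \<Rightarrow> (real^'n \<Rightarrow> real) \<Rightarrow> nat \<Rightarrow> int \<Rightarrow> (real^'n \<Rightarrow> real)
     \<Rightarrow> (real^'n \<Rightarrow> real) \<Rightarrow> real^'n \<Rightarrow> real \<Rightarrow> real" where
  "Fljb \<Omega> \<phi> l j b f x t = (LINT y|lborel. (b x - b y) * Kconv \<Omega> \<phi> l j t (x - y) * f y)"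

definition esqrt :: "ennreal \<Rightarrow> ennreal" where
  "esqrt a = (if a = \<infinity> then \<infinity> else ennreal (sqrt (enn2real a)))"

text \<open>Square function with j ranging over a set J of integers
  (J = UNIV gives the full operator, J = {j0<..} the truncated one).\<close>
definition Mtilde :: "(real^'n \<Rightarrow> real) \<Rightarrow> (real^'n \<Rightarrow> real) \<Rightarrow> nat \<Rightarrow> int set
     \<Rightarrow> (real^'n \<Rightarrow> real) \<Rightarrow> (real^'n \<Rightarrow> real) \<Rightarrow> real^'n \<Rightarrow> ennreal" where
  "Mtilde \<Omega> \<phi> l J b f x = esqrt (\<integral>\<^sup>+ t \<in> {1..2}.
      (\<integral>\<^sup>+ j. ennreal ((Fljb \<Omega> \<phi> l j b f x t)\<^sup>2) \<partial>count_space J) \<partial>lborel)"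

definition HL_max :: "(real^'n \<Rightarrow> ennreal) \<Rightarrow> real^'n \<Rightarrow> ennreal" where
  "HL_max g x = (SUP r\<in>{0<..}. (\<integral>\<^sup>+ y \<in> ball x r. g y \<partial>lborel) / emeasure lborel (ball x r))"

definition M_Omega :: "(real^'n \<Rightarrow> real) \<Rightarrow> (real^'n \<Rightarrow> real) \<Rightarrow> real^'n \<Rightarrow> ennreal" where
  "M_Omega \<Omega> h x = (SUP r\<in>{0<..}.
      (\<integral>\<^sup>+ y \<in> ball x r. ennreal \<bar>\<Omega> (x - y) * h y\<bar> \<partial>lborel) / emeasure lborel (ball x r))"

end

theory Submission
  imports Defs
begin

text \<open>Since K^j_t * phi_{j-l} vanishes outside |z| \<le> 4 * 2^j, the Lipschitz function b contributes
  a factor 4 L 2^j to F^l_{j,b} f(x,t). Moreover |K^j_t(u)| \<le> 2^(n-1) 2^(-jn) |\<Omega>(u)| on the ball of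
  radius 4 * 2^j, so |K^j_t| * |f| \<le> c M_\<Omega> f, and averaging against phi_{j-l} turns this into
  c M M_\<Omega> f. Hence |F^l_{j,b} f(x,t)| \<le> B 2^j M M_\<Omega> f(x) uniformly in t \<in> [1,2] and l. The terms
  j \<le> j0 dropped by the truncation form a geometric series whose square root is at most
  2 B 2^j0 M M_\<Omega> f(x), and the triangle inequality for the square root yields both inequalities.\<close>

lemma esqrt_power2_ge: "a \<le> (esqrt a)\<^sup>2"
proof (cases a)
  case (real r)
  then show ?thesis by (simp add: esqrt_def ennreal_power)
qed (simp add: esqrt_def)

lemma esqrt_leI:
  assumes "a \<le> y\<^sup>2"
  shows "esqrt a \<le> y"
proof (cases y)
  case (real s)
  then obtain r where r: "a = ennreal r" "0 \<le> r" "r \<le> s\<^sup>2"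
    using assms by (cases a) (auto simp: ennreal_power top_unique)
  then have "sqrt r \<le> s"
    using \<open>0 \<le> s\<close> real_le_lsqrt by blast
  then show ?thesis using r real by (simp add: esqrt_def)
qed simp

lemma esqrt_mono: "a \<le> b \<Longrightarrow> esqrt a \<le> esqrt b"
  using esqrt_leI esqrt_power2_ge order_trans by blast

lemma esqrt_add_le:
  fixes a s e :: ennreal
  assumes "a \<le> s + e\<^sup>2"
  shows "esqrt a \<le> esqrt s + e"
proof (rule esqrt_leI)
  have "a \<le> (esqrt s)\<^sup>2 + e\<^sup>2"
    using assms esqrt_power2_ge[of s] by (meson add_right_mono order_trans)
  also have "\<dots> \<le> (esqrt s + e)\<^sup>2"
    by (simp add: power2_eq_square algebra_simps add_increasing2)
  finally show "a \<le> (esqrt s + e)\<^sup>2" .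
qed

lemma ennreal_abs_integral_le_nn_integral:
  "ennreal \<bar>integral\<^sup>L M g\<bar> \<le> (\<integral>\<^sup>+ x. ennreal \<bar>g x\<bar> \<partial>M)"
  using integral_norm_bound_ennreal[of M g] not_integrable_integral_eq[of M g]
  by (cases "integrable M g") auto

text \<open>h need not be measurable (it will be a maximal function): the constant is pulled out of g / c.\<close>
lemma nn_integral_le_cmult:
  fixes c :: ennreal
  assumes [measurable]: "g \<in> borel_measurable M"
    and le: "\<And>x. x \<in> space M \<Longrightarrow> g x \<le> c * h x" and c: "c \<noteq> top"
  shows "integral\<^sup>N M g \<le> c * integral\<^sup>N M h"
proof (cases "c = 0")
  case True
  then have "integral\<^sup>N M g = (\<integral>\<^sup>+ x. 0 \<partial>M)"
    using le by (intro nn_integral_cong) auto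
  then show ?thesis by simp
next
  case False
  have "integral\<^sup>N M g = (\<integral>\<^sup>+ x. c * (g x / c) \<partial>M)"
    using False c by (intro nn_integral_cong)
      (simp add: ennreal_times_divide mult.commute[of c] mult_divide_eq_ennreal)
  also have "\<dots> = c * (\<integral>\<^sup>+ x. g x / c \<partial>M)"
    by (rule nn_integral_cmult) measurable
  also have "\<dots> \<le> c * integral\<^sup>N M h"
  proof (intro mult_left_mono nn_integral_mono)
    fix x assume "x \<in> space M"
    then have "g x / c \<le> c * h x / c"
      using le divide_right_mono_ennreal by blast
    then show "g x / c \<le> h x"
      using False c by (simp add: mult.commute[of c] mult_divide_eq_ennreal)
  qed simp
  finally show ?thesis .
qed

lemma nn_integral_count_space_split:
  fixes g :: "'a \<Rightarrow> ennreal"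
  shows "(\<integral>\<^sup>+ j. g j \<partial>count_space UNIV) = (\<integral>\<^sup>+ j. g j \<partial>count_space A) + (\<integral>\<^sup>+ j. g j \<partial>count_space (- A))"
  using nn_integral_disjoint_pair_countspace[of A "- A" g]
  by (simp add: nn_integral_count_space_indicator)

lemma borel_measurable_nn_integral_count_space:
  fixes g :: "'a \<Rightarrow> 'b::countable \<Rightarrow> ennreal"
  assumes "\<And>j. (\<lambda>t. g t j) \<in> borel_measurable M"
  shows "(\<lambda>t. \<integral>\<^sup>+ j. g t j \<partial>count_space J) \<in> borel_measurable M"
proof -
  interpret C: sigma_finite_measure "count_space (UNIV::'b set)"
    by (rule sigma_finite_measure_count_space)
  have "(\<lambda>(j, t). g t j * indicator J j) \<in> borel_measurable (count_space UNIV \<Otimes>\<^sub>M M)"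
    by (rule measurable_pair_measure_countable1) (use assms in auto)
  then have "(\<lambda>(t, j). g t j * indicator J j) \<in> borel_measurable (M \<Otimes>\<^sub>M count_space UNIV)"
    using measurable_pair_swap by fastforce
  then have "(\<lambda>t. \<integral>\<^sup>+ j. g t j * indicator J j \<partial>count_space UNIV) \<in> borel_measurable M"
    by (rule C.borel_measurable_nn_integral)
  then show ?thesis by (simp add: nn_integral_count_space_indicator)
qed

lemma C0_infty_differentiable: "C0_infty b \<Longrightarrow> b differentiable (at x)"
  using iter_dderiv.simps(1)[of b] unfolding C0_infty_def smooth_fun_def by metis

lemma C0_infty_continuous: "C0_infty b \<Longrightarrow> continuous_on UNIV b"
  by (simp add: C0_infty_differentiable continuous_at_imp_continuous_on
      differentiable_imp_continuous_within)

lemma bounded_if_compact_support: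
  fixes g :: "'a::topological_space \<Rightarrow> real"
  assumes "continuous_on UNIV g" "compact S" "\<And>x. x \<notin> S \<Longrightarrow> g x = 0"
  shows "\<exists>P\<ge>0. \<forall>x. \<bar>g x\<bar> \<le> P"
proof -
  have "compact (g ` S)"
    using assms(1,2) by (meson compact_continuous_image continuous_on_subset subset_UNIV)
  then obtain P where P: "\<forall>y\<in>g ` S. norm y \<le> P"
    using compact_imp_bounded bounded_iff by metis
  have "\<bar>g x\<bar> \<le> max P 0" for x
    using P assms(3)[of x] by (cases "x \<in> S") force+
  then show ?thesis by (intro exI[of _ "max P 0"]) auto
qed

lemma C0_infty_bounded:
  fixes b :: "'a::euclidean_space \<Rightarrow> real"
  assumes "C0_infty b"
  shows "\<exists>P\<ge>0. \<forall>x. \<bar>b x\<bar> \<le> P"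
  using assms closure_subset[of "{x. b x \<noteq> 0}"]
  by (intro bounded_if_compact_support[where S="closure {x. b x \<noteq> 0}"])
     (auto simp: C0_infty_continuous C0_infty_def)

lemma C0_infty_derivative_bounded:
  fixes b :: "real^'n \<Rightarrow> real"
  assumes b: "C0_infty b"
  shows "\<exists>L\<ge>0. \<forall>x h. \<bar>frechet_derivative b (at x) h\<bar> \<le> L * norm h"
proof -
  let ?S = "closure {x. b x \<noteq> 0}"
  define D where "D x = frechet_derivative b (at x)" for x
  have D: "(b has_derivative D x) (at x)" for x
    using C0_infty_differentiable[OF b] frechet_derivative_works unfolding D_def by blast
  define G where "G x = (\<Sum>i\<in>UNIV. \<bar>D x (axis i 1)\<bar>)" for x
  have "iter_dderiv [v] b differentiable (at y)" for v y
    using b unfolding C0_infty_def smooth_fun_def by blast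
  then have "(\<lambda>x. D x v) differentiable (at y)" for v y
    by (simp add: D_def)
  then have "continuous_on UNIV G"
    unfolding G_def
    by (intro continuous_intros continuous_at_imp_continuous_on ballI differentiable_imp_continuous_within)
  moreover have "G x = 0" if "x \<notin> ?S" for x
  proof -
    have "(b has_derivative (\<lambda>h. 0)) (at x)"
      by (rule has_derivative_transform_within_open[where f="\<lambda>x. 0" and s="- ?S"])
         (use that closure_subset[of "{x. b x \<noteq> 0}"] in auto)
    then have "D x = (\<lambda>h. 0)"
      unfolding D_def by (rule frechet_derivative_at[symmetric])
    then show ?thesis by (simp add: G_def)
  qed
  moreover have "compact ?S"
    using b by (simp add: C0_infty_def)
  ultimately obtain L where "L \<ge> 0" and L: "\<And>x. \<bar>G x\<bar> \<le> L"
    using bounded_if_compact_support[of G ?S] by blast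
  have "\<bar>D x h\<bar> \<le> L * norm h" for x h
  proof -
    have "D x h = D x (\<Sum>i\<in>UNIV. h$i *\<^sub>R axis i 1)"
      using basis_expansion[of h] by (simp add: scalar_mult_eq_scaleR)
    also have "\<dots> = (\<Sum>i\<in>UNIV. h$i * D x (axis i 1))"
      using has_derivative_linear[OF D[of x]] by (simp add: linear_sum linear_scale)
    finally have "D x h = (\<Sum>i\<in>UNIV. h$i * D x (axis i 1))" .
    then have "\<bar>D x h\<bar> \<le> (\<Sum>i\<in>UNIV. \<bar>h$i * D x (axis i 1)\<bar>)"
      by (metis sum_abs)
    also have "\<dots> = (\<Sum>i\<in>UNIV. \<bar>h$i\<bar> * \<bar>D x (axis i 1)\<bar>)"
      by (simp add: abs_mult)
    also have "\<dots> \<le> (\<Sum>i\<in>UNIV. norm h * \<bar>D x (axis i 1)\<bar>)"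
      by (intro sum_mono mult_right_mono component_le_norm_cart) auto
    also have "\<dots> = norm h * G x"
      by (simp add: G_def sum_distrib_left)
    also have "\<dots> \<le> norm h * L"
      using L[of x] by (intro mult_left_mono) auto
    finally show ?thesis by (simp add: mult.commute)
  qed
  with \<open>L \<ge> 0\<close> show ?thesis unfolding D_def by blast
qed

lemma C0_infty_lipschitz:
  fixes b :: "real^'n \<Rightarrow> real"
  assumes b: "C0_infty b"
  shows "\<exists>L\<ge>0. \<forall>x y. \<bar>b x - b y\<bar> \<le> L * norm (x - y)"
proof -
  obtain L where "L \<ge> 0" and L: "\<And>x h. \<bar>frechet_derivative b (at x) h\<bar> \<le> L * norm h"
    using C0_infty_derivative_bounded[OF b] by blast
  have "norm (b x - b y) \<le> L * norm (x - y)" for x y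
    using C0_infty_differentiable[OF b]
    by (intro differentiable_bound[where S=UNIV and f'="\<lambda>x. frechet_derivative b (at x)"])
       (auto intro!: onorm_le L simp: frechet_derivative_works)
  with \<open>L \<ge> 0\<close> show ?thesis by auto
qed

lemma borel_measurable_if_integrable_sphere_measure:
  fixes \<Omega> :: "'a::euclidean_space \<Rightarrow> real"
  assumes "integrable sphere_measure \<Omega>"
  shows "\<Omega> \<in> borel_measurable borel"
proof -
  have "sets (sphere_measure :: 'a measure) = sets borel"
    by (simp add: sphere_measure_def)
  then show ?thesis
    using assms measurable_cong_sets by blast
qed

lemma borel_measurable_if_locally_integrable:
  fixes f :: "'a::euclidean_space \<Rightarrow> real"
  assumes "\<And>K. compact K \<Longrightarrow> set_integrable lborel K f"
  shows "f \<in> borel_measurable borel"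
proof (rule borel_measurable_LIMSEQ_metric)
  fix k :: nat
  show "(\<lambda>x. indicator (cball 0 (real k)) x *\<^sub>R f x) \<in> borel_measurable borel"
    using assms[OF compact_cball] unfolding set_integrable_def by auto
next
  fix x :: 'a
  obtain k0 :: nat where "norm x \<le> real k0" using real_arch_simple by blast
  then have "\<forall>\<^sub>F k in sequentially. indicator (cball 0 (real k)) x *\<^sub>R f x = f x"
    by (intro eventually_sequentiallyI[of k0]) (auto simp: dist_norm)
  then show "(\<lambda>k. indicator (cball 0 (real k)) x *\<^sub>R f x) \<longlonglongrightarrow> f x"
    by (rule tendsto_eventually)
qed

lemma borel_measurable_Kjt_pair:
  fixes \<Omega> :: "real^'n \<Rightarrow> real"
  assumes "\<Omega> \<in> borel_measurable borel"
  shows "(\<lambda>p. Kjt \<Omega> j (fst p) (snd p)) \<in> borel_measurable (borel \<Otimes>\<^sub>M borel)"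
proof -
  have p: "Measurable.pred (borel \<Otimes>\<^sub>M borel)
      (\<lambda>p::real \<times> (real^'n). a * fst p < norm (snd p) \<and> norm (snd p) \<le> c * fst p)" for a c
    by measurable
  have "Kjt \<Omega> j (fst p) (snd p) = 2 powr (- real_of_int j) * \<Omega> (snd p) / norm (snd p) ^ (CARD('n) - 1)
      * (if 2 powr (real_of_int j - 1) * fst p < norm (snd p) \<and> norm (snd p) \<le> 2 powr (real_of_int j) * fst p
         then 1 else 0)" for p :: "real \<times> (real^'n)"
    by (simp add: Kjt_def indicator_def)
  then show ?thesis
    by (simp only:)
       (intro borel_measurable_times borel_measurable_divide measurable_If predE[OF p] borel_measurable_const
         borel_measurable_power measurable_compose[OF measurable_snd assms]
         measurable_compose[OF measurable_snd borel_measurable_norm])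
qed

lemma borel_measurable_Kjt[measurable]:
  fixes \<Omega> :: "real^'n \<Rightarrow> real"
  assumes "\<Omega> \<in> borel_measurable borel" "f \<in> borel_measurable M" "g \<in> borel_measurable M"
  shows "(\<lambda>p. Kjt \<Omega> j (f p) (g p)) \<in> borel_measurable M"
  using measurable_compose[OF measurable_Pair[OF assms(2,3)] borel_measurable_Kjt_pair[OF assms(1)]]
  by (simp add: borel_prod)

lemma borel_measurable_phi_sc[measurable]:
  fixes \<phi> :: "real^'n \<Rightarrow> real"
  assumes [measurable]: "\<phi> \<in> borel_measurable borel" "g \<in> borel_measurable M"
  shows "(\<lambda>p. phi_sc \<phi> k (g p)) \<in> borel_measurable M"
  unfolding phi_sc_def by measurable

lemma borel_measurable_Kconv_pair:
  fixes \<Omega> \<phi> :: "real^'n \<Rightarrow> real"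
  assumes [measurable]: "\<Omega> \<in> borel_measurable borel" "\<phi> \<in> borel_measurable borel"
  shows "(\<lambda>p. Kconv \<Omega> \<phi> l j (fst p) (snd p)) \<in> borel_measurable (borel \<Otimes>\<^sub>M borel)"
  unfolding Kconv_def by measurable

lemma borel_measurable_Kconv[measurable]:
  fixes \<Omega> \<phi> :: "real^'n \<Rightarrow> real"
  assumes "\<Omega> \<in> borel_measurable borel" "\<phi> \<in> borel_measurable borel"
    "f \<in> borel_measurable M" "g \<in> borel_measurable M"
  shows "(\<lambda>p. Kconv \<Omega> \<phi> l j (f p) (g p)) \<in> borel_measurable M"
  using measurable_compose[OF measurable_Pair[OF assms(3,4)] borel_measurable_Kconv_pair[OF assms(1,2)]]
  by (simp add: borel_prod)

lemma borel_measurable_Fljb: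
  fixes \<Omega> \<phi> b f :: "real^'n \<Rightarrow> real"
  assumes [measurable]: "\<Omega> \<in> borel_measurable borel" "\<phi> \<in> borel_measurable borel"
    "b \<in> borel_measurable borel" "f \<in> borel_measurable borel"
  shows "(\<lambda>t. Fljb \<Omega> \<phi> l j b f x t) \<in> borel_measurable borel"
  unfolding Fljb_def by measurable

lemma emeasure_lborel_ball_eq:
  fixes x :: "'a::euclidean_space"
  assumes "0 \<le> r"
  shows "emeasure lborel (ball x r) = ennreal (r ^ DIM('a) * measure lborel (ball (0::'a) 1))"
  using emeasure_lborel_ball_finite[of x r] content_ball_conv_unit_ball[OF assms, of x]
  by (simp add: emeasure_eq_ennreal_measure)

lemma nn_integral_ball_le_HL_max:
  fixes x :: "real^'n"
  assumes "0 < r"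
  shows "(\<integral>\<^sup>+ y \<in> ball x r. g y \<partial>lborel) \<le> HL_max g x * emeasure lborel (ball x r)"
proof -
  let ?m = "emeasure lborel (ball x r)"
  have "?m \<noteq> 0" "?m \<noteq> top"
    using assms content_ball_pos[OF assms, of "0::real^'n"] emeasure_lborel_ball_finite[of x r]
    by (auto simp: emeasure_lborel_ball_eq)
  then have "?m / ?m = 1"
    using divide_eq_1_ennreal by blast
  then have "(\<integral>\<^sup>+ y \<in> ball x r. g y \<partial>lborel) = (\<integral>\<^sup>+ y \<in> ball x r. g y \<partial>lborel) / ?m * ?m"
    by (simp add: ennreal_divide_times)
  also have "\<dots> \<le> HL_max g x * ?m"
    unfolding HL_max_def by (intro mult_right_mono SUP_upper) (use assms in auto)
  finally show ?thesis .
qed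

lemma M_Omega_eq_HL_max: "M_Omega \<Omega> h x = HL_max (\<lambda>y. ennreal \<bar>\<Omega> (x - y) * h y\<bar>) x"
  by (simp add: M_Omega_def HL_max_def)

lemma HL_max_le_cmult:
  fixes g h :: "real^'n \<Rightarrow> ennreal"
  assumes [measurable]: "g \<in> borel_measurable borel"
    and le: "\<And>y. g y \<le> c * h y" and c: "c \<noteq> top"
  shows "HL_max g x \<le> c * HL_max h x"
  unfolding HL_max_def
proof (rule SUP_least)
  fix r :: real assume r: "r \<in> {0<..}"
  have "(\<integral>\<^sup>+ y \<in> ball x r. g y \<partial>lborel) \<le> c * (\<integral>\<^sup>+ y \<in> ball x r. h y \<partial>lborel)"
    using le c by (intro nn_integral_le_cmult) (auto simp: indicator_def)
  then have "(\<integral>\<^sup>+ y \<in> ball x r. g y \<partial>lborel) / emeasure lborel (ball x r)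
      \<le> c * ((\<integral>\<^sup>+ y \<in> ball x r. h y \<partial>lborel) / emeasure lborel (ball x r))"
    unfolding ennreal_times_divide by (rule divide_right_mono_ennreal)
  also have "\<dots> \<le> c * (SUP r\<in>{0<..}. (\<integral>\<^sup>+ y \<in> ball x r. h y \<partial>lborel) / emeasure lborel (ball x r))"
    using r by (intro mult_left_mono SUP_upper) auto
  finally show "(\<integral>\<^sup>+ y \<in> ball x r. g y \<partial>lborel) / emeasure lborel (ball x r)
      \<le> c * (SUP r\<in>{0<..}. (\<integral>\<^sup>+ y \<in> ball x r. h y \<partial>lborel) / emeasure lborel (ball x r))" .
qed

lemma nn_integral_lborel_reflect:
  fixes h :: "'a::euclidean_space \<Rightarrow> ennreal"
  assumes [measurable]: "h \<in> borel_measurable borel"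
  shows "(\<integral>\<^sup>+ w. h w \<partial>lborel) = (\<integral>\<^sup>+ v. h (x - v) \<partial>lborel)"
proof -
  have "lborel = density (distr lborel borel ((-) x)) (\<lambda>_. 1)"
    using lborel_affine[of "-1" x] by simp
  then have "(\<integral>\<^sup>+ w. h w \<partial>lborel) = (\<integral>\<^sup>+ w. h w \<partial>density (distr lborel borel ((-) x)) (\<lambda>_. 1))"
    by simp
  also have "\<dots> = (\<integral>\<^sup>+ v. h (x - v) \<partial>lborel)"
    by (simp add: nn_integral_density nn_integral_distr)
  finally show ?thesis .
qed

lemma norm_le_if_phi_sc_nonzero:
  fixes \<phi> :: "real^'n \<Rightarrow> real"
  assumes supp: "{x. \<phi> x \<noteq> 0} \<subseteq> cball 0 (1/4)" and "phi_sc \<phi> k w \<noteq> 0"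
  shows "norm w \<le> 2 powr real_of_int k / 4"
proof -
  have "2 powr (- real_of_int k) * norm w \<le> 1/4"
    using assms by (auto simp: phi_sc_def)
  then have "2 powr real_of_int k * (2 powr (- real_of_int k) * norm w) \<le> 2 powr real_of_int k / 4"
    by (simp add: mult_left_mono)
  then show ?thesis by (simp add: powr_minus field_simps)
qed

lemma phi_sc_le:
  fixes \<phi> :: "real^'n \<Rightarrow> real"
  assumes "\<And>x. \<phi> x \<le> P"
  shows "phi_sc \<phi> k y \<le> P * 2 powr (- real CARD('n) * real_of_int k)"
  using assms by (simp add: phi_sc_def mult.commute mult_left_mono)

lemma norm_le_if_Kjt_nonzero: "Kjt \<Omega> j t u \<noteq> 0 \<Longrightarrow> norm u \<le> 2 powr real_of_int j * t"
  by (simp add: Kjt_def indicator_def split: if_splits)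

lemma norm_le_if_Kconv_nonzero:
  fixes \<Omega> \<phi> :: "real^'n \<Rightarrow> real"
  assumes supp: "{x. \<phi> x \<noteq> 0} \<subseteq> cball 0 (1/4)" and "t \<le> 2"
    and "Kconv \<Omega> \<phi> l j t z \<noteq> 0"
  shows "norm z \<le> 4 * 2 powr real_of_int j"
proof -
  have "\<exists>w. Kjt \<Omega> j t (z - w) \<noteq> 0 \<and> phi_sc \<phi> (j - int l) w \<noteq> 0"
  proof (rule ccontr)
    assume "\<nexists>w. Kjt \<Omega> j t (z - w) \<noteq> 0 \<and> phi_sc \<phi> (j - int l) w \<noteq> 0"
    then have "(\<lambda>w. Kjt \<Omega> j t (z - w) * phi_sc \<phi> (j - int l) w) = (\<lambda>w. 0)"
      by auto
    with assms(3) show False by (simp add: Kconv_def)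
  qed
  then obtain w where w: "Kjt \<Omega> j t (z - w) \<noteq> 0" "phi_sc \<phi> (j - int l) w \<noteq> 0"
    by blast
  have "norm (z - w) \<le> 2 powr real_of_int j * 2"
    using norm_le_if_Kjt_nonzero[OF w(1)] \<open>t \<le> 2\<close> by (meson mult_left_mono order_trans powr_ge_zero)
  moreover have "norm w \<le> 2 powr real_of_int j"
  proof -
    have "2 powr real_of_int (j - int l) \<le> 2 powr real_of_int j"
      by (intro powr_mono) auto
    then show ?thesis
      using norm_le_if_phi_sc_nonzero[OF supp w(2)] powr_gt_zero[of 2 "real_of_int j"] by linarith
  qed
  moreover have "norm z \<le> norm (z - w) + norm w"
    using norm_triangle_ineq[of "z - w" w] by simp
  ultimately show ?thesis
    using powr_ge_zero[of 2 "real_of_int j"] by linarith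
qed

lemma abs_Kjt_le:
  fixes \<Omega> :: "real^'n \<Rightarrow> real"
  assumes "1 \<le> t" "t \<le> 2"
  shows "\<bar>Kjt \<Omega> j t u\<bar>
    \<le> 2 ^ (CARD('n) - 1) / (2 powr real_of_int j) ^ CARD('n) * \<bar>\<Omega> u\<bar> * indicator (ball 0 (4 * 2 powr real_of_int j)) u"
proof (cases "Kjt \<Omega> j t u = 0")
  case False
  define s where "s = 2 powr real_of_int j"
  define n where "n = CARD('n)"
  have "s > 0" by (simp add: s_def)
  have "2 powr (real_of_int j - 1) = s / 2" by (simp add: s_def powr_diff)
  with False have u: "s / 2 * t < norm u" "norm u \<le> s * t"
    by (auto simp: Kjt_def indicator_def s_def split: if_splits)
  moreover have "s / 2 \<le> s / 2 * t" "s * t \<le> s * 2"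
    using assms \<open>s > 0\<close> by simp_all
  ultimately have "s / 2 < norm u" "norm u < 4 * s"
    using \<open>s > 0\<close> by linarith+
  then have "(s / 2) ^ (n - 1) \<le> norm u ^ (n - 1)"
    using \<open>s > 0\<close> by (intro power_mono) auto
  have "Kjt \<Omega> j t u = \<Omega> u / norm u ^ (n - 1) / s"
    using False by (auto simp: Kjt_def s_def n_def powr_minus field_simps indicator_def split: if_splits)
  then have "\<bar>Kjt \<Omega> j t u\<bar> = \<bar>\<Omega> u\<bar> / norm u ^ (n - 1) / s"
    using \<open>s > 0\<close> by simp
  also have "\<dots> \<le> \<bar>\<Omega> u\<bar> / (s / 2) ^ (n - 1) / s"
    using \<open>s > 0\<close> \<open>s / 2 < norm u\<close> \<open>(s / 2) ^ (n - 1) \<le> norm u ^ (n - 1)\<close>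
    by (intro divide_right_mono divide_left_mono mult_pos_pos zero_less_power) auto
  also have "\<dots> = 2 ^ (n - 1) / s ^ n * \<bar>\<Omega> u\<bar>"
    using \<open>s > 0\<close> by (cases n) (simp_all add: n_def power_divide field_simps)
  also have "\<dots> = 2 ^ (n - 1) / s ^ n * \<bar>\<Omega> u\<bar> * indicator (ball 0 (4 * s)) u"
    using \<open>norm u < 4 * s\<close> by simp
  finally show ?thesis by (simp only: s_def n_def)
qed simp

lemma nn_integral_Kjt_le_M_Omega:
  fixes \<Omega> f :: "real^'n \<Rightarrow> real"
  assumes [measurable]: "\<Omega> \<in> borel_measurable borel" "f \<in> borel_measurable borel"
    and t: "1 \<le> t" "t \<le> 2"
  shows "(\<integral>\<^sup>+ y. ennreal (\<bar>Kjt \<Omega> j t (v - y)\<bar> * \<bar>f y\<bar>) \<partial>lborel)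
    \<le> ennreal (8 ^ CARD('n) / 2 * measure lborel (ball (0::real^'n) 1)) * M_Omega \<Omega> f v"
proof -
  define s where "s = 2 powr real_of_int j"
  define n where "n = CARD('n)"
  define a where "a = 2 ^ (n - 1) / s ^ n"
  define c where "c = measure lborel (ball (0::real^'n) 1)"
  have "s > 0" "n > 0" by (simp_all add: s_def n_def)
  then have "a \<ge> 0" by (simp add: a_def)
  have "ennreal (\<bar>Kjt \<Omega> j t (v - y)\<bar> * \<bar>f y\<bar>)
      \<le> ennreal a * (ennreal \<bar>\<Omega> (v - y) * f y\<bar> * indicator (ball v (4 * s)) y)" for y
  proof -
    have "\<bar>Kjt \<Omega> j t (v - y)\<bar> \<le> a * \<bar>\<Omega> (v - y)\<bar> * indicator (ball v (4 * s)) y"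
      using abs_Kjt_le[OF t, of \<Omega> j "v - y"]
      by (simp add: a_def s_def n_def indicator_def dist_norm norm_minus_commute)
    then have "\<bar>Kjt \<Omega> j t (v - y)\<bar> * \<bar>f y\<bar> \<le> a * \<bar>\<Omega> (v - y)\<bar> * indicator (ball v (4 * s)) y * \<bar>f y\<bar>"
      by (rule mult_right_mono) simp
    then have "\<bar>Kjt \<Omega> j t (v - y)\<bar> * \<bar>f y\<bar> \<le> a * (\<bar>\<Omega> (v - y) * f y\<bar> * indicator (ball v (4 * s)) y)"
      by (simp add: abs_mult mult_ac)
    with \<open>a \<ge> 0\<close> show ?thesis
      by (cases "y \<in> ball v (4 * s)") (auto simp: ennreal_leI mult_le_0_iff simp flip: ennreal_mult')
  qed
  then have "(\<integral>\<^sup>+ y. ennreal (\<bar>Kjt \<Omega> j t (v - y)\<bar> * \<bar>f y\<bar>) \<partial>lborel)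
      \<le> ennreal a * (\<integral>\<^sup>+ y \<in> ball v (4 * s). ennreal \<bar>\<Omega> (v - y) * f y\<bar> \<partial>lborel)"
    by (intro nn_integral_le_cmult) auto
  also have "\<dots> \<le> ennreal a * (M_Omega \<Omega> f v * emeasure lborel (ball v (4 * s)))"
    unfolding M_Omega_eq_HL_max using \<open>s > 0\<close>
    by (intro mult_left_mono nn_integral_ball_le_HL_max) auto
  also have "\<dots> = ennreal a * ennreal ((4 * s) ^ n * c) * M_Omega \<Omega> f v"
    using \<open>s > 0\<close> by (simp add: emeasure_lborel_ball_eq n_def c_def mult_ac)
  also have "\<dots> = ennreal (a * (4 * s) ^ n * c) * M_Omega \<Omega> f v"
    using \<open>a \<ge> 0\<close> by (simp add: ennreal_mult' mult.assoc)
  also have "a * (4 * s) ^ n = 8 ^ n / 2"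
  proof -
    obtain m where n: "n = Suc m" using \<open>n > 0\<close> gr0_implies_Suc by blast
    have "a * (4 * s) ^ n = 2 ^ m * 4 ^ n"
      using \<open>s > 0\<close> by (simp add: a_def n power_mult_distrib)
    also have "\<dots> = 8 ^ n / 2"
      using power_mult_distrib[of "2::real" 4 m] by (simp add: n)
    finally show ?thesis .
  qed
  finally show ?thesis by (simp add: n_def c_def)
qed

lemma nn_integral_phi_sc_le_HL_max:
  fixes \<phi> :: "real^'n \<Rightarrow> real" and g :: "real^'n \<Rightarrow> ennreal"
  assumes [measurable]: "\<phi> \<in> borel_measurable borel" "g \<in> borel_measurable borel"
    and le: "\<And>x. \<phi> x \<le> P" and supp: "{x. \<phi> x \<noteq> 0} \<subseteq> cball 0 (1/4)"
  shows "(\<integral>\<^sup>+ v. ennreal (phi_sc \<phi> k (x - v)) * g v \<partial>lborel)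
    \<le> ennreal (P * measure lborel (ball (0::real^'n) 1)) * HL_max g x"
proof -
  define \<rho> where "\<rho> = 2 powr real_of_int k"
  define a where "a = P * 2 powr (- real CARD('n) * real_of_int k)"
  have "\<rho> > 0" by (simp add: \<rho>_def)
  have "ennreal (phi_sc \<phi> k (x - v)) * g v \<le> ennreal a * (g v * indicator (ball x \<rho>) v)" for v
  proof (cases "phi_sc \<phi> k (x - v) = 0")
    case False
    have "norm (x - v) \<le> \<rho> / 4"
      using norm_le_if_phi_sc_nonzero[OF supp False] by (simp add: \<rho>_def)
    then have "v \<in> ball x \<rho>"
      using \<open>\<rho> > 0\<close> by (simp add: dist_norm)
    moreover have "phi_sc \<phi> k (x - v) \<le> a"
      using phi_sc_le[of \<phi> P k "x - v"] le by (simp add: a_def)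
    then have "ennreal (phi_sc \<phi> k (x - v)) \<le> ennreal a"
      by (rule ennreal_leI)
    ultimately show ?thesis by (simp add: mult_right_mono)
  qed simp
  then have "(\<integral>\<^sup>+ v. ennreal (phi_sc \<phi> k (x - v)) * g v \<partial>lborel)
      \<le> ennreal a * (\<integral>\<^sup>+ v \<in> ball x \<rho>. g v \<partial>lborel)"
    by (intro nn_integral_le_cmult) auto
  also have "\<dots> \<le> ennreal a * (HL_max g x * emeasure lborel (ball x \<rho>))"
    using \<open>\<rho> > 0\<close> by (intro mult_left_mono nn_integral_ball_le_HL_max) auto
  also have "\<dots> = ennreal (a * \<rho> ^ CARD('n) * measure lborel (ball (0::real^'n) 1)) * HL_max g x"
    using \<open>\<rho> > 0\<close> by (simp add: emeasure_lborel_ball_eq ennreal_mult'' mult_ac)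
  also have "a * \<rho> ^ CARD('n) = P"
    by (simp add: a_def \<rho>_def powr_realpow[symmetric] powr_powr flip: powr_add)
  finally show ?thesis .
qed

lemma nn_integral_abs_Kconv_le:
  fixes \<Omega> \<phi> f :: "real^'n \<Rightarrow> real"
  assumes [measurable]: "\<Omega> \<in> borel_measurable borel" "\<phi> \<in> borel_measurable borel"
    "f \<in> borel_measurable borel"
    and phi_nn: "\<And>x. \<phi> x \<ge> 0"
  shows "(\<integral>\<^sup>+ y. ennreal (\<bar>Kconv \<Omega> \<phi> l j t (x - y)\<bar> * \<bar>f y\<bar>) \<partial>lborel)
    \<le> (\<integral>\<^sup>+ v. ennreal (phi_sc \<phi> (j - int l) (x - v))
          * (\<integral>\<^sup>+ y. ennreal (\<bar>Kjt \<Omega> j t (v - y)\<bar> * \<bar>f y\<bar>) \<partial>lborel) \<partial>lborel)"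
proof -
  define k where "k = j - int l"
  define G where "G v y = ennreal (phi_sc \<phi> k (x - v)) * ennreal (\<bar>Kjt \<Omega> j t (v - y)\<bar> * \<bar>f y\<bar>)" for v y
  have [measurable]: "(\<lambda>p. G (fst p) (snd p)) \<in> borel_measurable (lborel \<Otimes>\<^sub>M lborel)"
    "(\<lambda>p. G (snd p) (fst p)) \<in> borel_measurable (lborel \<Otimes>\<^sub>M lborel)"
    unfolding G_def by measurable
  have phi_sc_nn: "phi_sc \<phi> k w \<ge> 0" for w
    using phi_nn by (simp add: phi_sc_def)
  have "ennreal (\<bar>Kconv \<Omega> \<phi> l j t (x - y)\<bar> * \<bar>f y\<bar>) \<le> (\<integral>\<^sup>+ v. G v y \<partial>lborel)" for y
  proof -
    have "ennreal \<bar>Kconv \<Omega> \<phi> l j t (x - y)\<bar>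
        \<le> (\<integral>\<^sup>+ w. ennreal \<bar>Kjt \<Omega> j t (x - y - w) * phi_sc \<phi> k w\<bar> \<partial>lborel)"
      unfolding Kconv_def k_def by (rule ennreal_abs_integral_le_nn_integral)
    also have "\<dots> = (\<integral>\<^sup>+ v. ennreal \<bar>Kjt \<Omega> j t (v - y) * phi_sc \<phi> k (x - v)\<bar> \<partial>lborel)"
      by (subst nn_integral_lborel_reflect[where x=x]) simp_all
    finally have "ennreal \<bar>Kconv \<Omega> \<phi> l j t (x - y)\<bar> * ennreal \<bar>f y\<bar>
        \<le> (\<integral>\<^sup>+ v. ennreal \<bar>Kjt \<Omega> j t (v - y) * phi_sc \<phi> k (x - v)\<bar> \<partial>lborel) * ennreal \<bar>f y\<bar>"
      by (rule mult_right_mono) simp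
    also have "\<dots> = (\<integral>\<^sup>+ v. ennreal \<bar>Kjt \<Omega> j t (v - y) * phi_sc \<phi> k (x - v)\<bar> * ennreal \<bar>f y\<bar> \<partial>lborel)"
      by (rule nn_integral_multc[symmetric]) measurable
    also have "\<dots> = (\<integral>\<^sup>+ v. G v y \<partial>lborel)"
      using phi_sc_nn by (intro nn_integral_cong) (simp add: G_def abs_mult ennreal_mult mult_ac)
    finally show ?thesis by (simp add: ennreal_mult)
  qed
  then have "(\<integral>\<^sup>+ y. ennreal (\<bar>Kconv \<Omega> \<phi> l j t (x - y)\<bar> * \<bar>f y\<bar>) \<partial>lborel)
      \<le> (\<integral>\<^sup>+ y. (\<integral>\<^sup>+ v. G v y \<partial>lborel) \<partial>lborel)"
    by (rule nn_integral_mono)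
  also have "\<dots> = (\<integral>\<^sup>+ v. (\<integral>\<^sup>+ y. G v y \<partial>lborel) \<partial>lborel)"
    by (rule lborel_pair.Fubini') measurable
  also have "\<dots> = (\<integral>\<^sup>+ v. ennreal (phi_sc \<phi> k (x - v))
      * (\<integral>\<^sup>+ y. ennreal (\<bar>Kjt \<Omega> j t (v - y)\<bar> * \<bar>f y\<bar>) \<partial>lborel) \<partial>lborel)"
    unfolding G_def by (intro nn_integral_cong nn_integral_cmult) measurable
  finally show ?thesis by (simp add: k_def)
qed

lemma Fljb_le_HL_max_M_Omega:
  fixes \<Omega> \<phi> b f :: "real^'n \<Rightarrow> real"
  assumes [measurable]: "\<Omega> \<in> borel_measurable borel" "\<phi> \<in> borel_measurable borel"
    "b \<in> borel_measurable borel" "f \<in> borel_measurable borel"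
    and phi_nn: "\<And>x. \<phi> x \<ge> 0" and phi_le: "\<And>x. \<phi> x \<le> P"
    and supp: "{x. \<phi> x \<noteq> 0} \<subseteq> cball 0 (1/4)"
    and Lip: "\<And>x y. \<bar>b x - b y\<bar> \<le> L * norm (x - y)" and "L \<ge> 0"
    and t: "1 \<le> t" "t \<le> 2"
  shows "ennreal \<bar>Fljb \<Omega> \<phi> l j b f x t\<bar>
    \<le> ennreal (2 * L * P * (measure lborel (ball (0::real^'n) 1))\<^sup>2 * 8 ^ CARD('n) * 2 powr real_of_int j)
       * HL_max (M_Omega \<Omega> f) x"
proof -
  define s where "s = 2 powr real_of_int j"
  define c where "c = measure lborel (ball (0::real^'n) 1)"
  define I where "I v = (\<integral>\<^sup>+ y. ennreal (\<bar>Kjt \<Omega> j t (v - y)\<bar> * \<bar>f y\<bar>) \<partial>lborel)" for v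
  have "s > 0" by (simp add: s_def)
  have "P \<ge> 0" using phi_nn[of 0] phi_le[of 0] by linarith
  have [measurable]: "I \<in> borel_measurable borel"
    unfolding I_def by measurable
  have "ennreal \<bar>(b x - b y) * Kconv \<Omega> \<phi> l j t (x - y) * f y\<bar>
      \<le> ennreal (4 * L * s) * ennreal (\<bar>Kconv \<Omega> \<phi> l j t (x - y)\<bar> * \<bar>f y\<bar>)" for y
  proof (cases "Kconv \<Omega> \<phi> l j t (x - y) = 0")
    case False
    have "L * norm (x - y) \<le> L * (4 * s)"
      using norm_le_if_Kconv_nonzero[OF supp t(2) False] \<open>L \<ge> 0\<close> by (simp add: s_def mult_left_mono)
    then have "\<bar>b x - b y\<bar> \<le> 4 * L * s"
      using Lip[of x y] by simp
    then have "\<bar>b x - b y\<bar> * (\<bar>Kconv \<Omega> \<phi> l j t (x - y)\<bar> * \<bar>f y\<bar>)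
        \<le> 4 * L * s * (\<bar>Kconv \<Omega> \<phi> l j t (x - y)\<bar> * \<bar>f y\<bar>)"
      by (rule mult_right_mono) simp
    then have "\<bar>(b x - b y) * Kconv \<Omega> \<phi> l j t (x - y) * f y\<bar>
        \<le> 4 * L * s * (\<bar>Kconv \<Omega> \<phi> l j t (x - y)\<bar> * \<bar>f y\<bar>)"
      by (simp add: abs_mult mult.assoc)
    then show ?thesis
      using \<open>L \<ge> 0\<close> \<open>s > 0\<close> by (simp add: ennreal_leI flip: ennreal_mult')
  qed simp
  then have "ennreal \<bar>Fljb \<Omega> \<phi> l j b f x t\<bar>
      \<le> ennreal (4 * L * s) * (\<integral>\<^sup>+ y. ennreal (\<bar>Kconv \<Omega> \<phi> l j t (x - y)\<bar> * \<bar>f y\<bar>) \<partial>lborel)"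
    unfolding Fljb_def
    by (intro order_trans[OF ennreal_abs_integral_le_nn_integral] nn_integral_le_cmult) auto
  also have "\<dots> \<le> ennreal (4 * L * s) * (\<integral>\<^sup>+ v. ennreal (phi_sc \<phi> (j - int l) (x - v)) * I v \<partial>lborel)"
    unfolding I_def by (intro mult_left_mono nn_integral_abs_Kconv_le phi_nn) auto
  also have "\<dots> \<le> ennreal (4 * L * s) * (ennreal (P * c) * HL_max I x)"
    unfolding c_def by (intro mult_left_mono nn_integral_phi_sc_le_HL_max phi_le supp) auto
  also have "\<dots> \<le> ennreal (4 * L * s) * (ennreal (P * c) * (ennreal (8 ^ CARD('n) / 2 * c) * HL_max (M_Omega \<Omega> f) x))"
    unfolding I_def c_def
    by (intro mult_left_mono HL_max_le_cmult nn_integral_Kjt_le_M_Omega t) auto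
  also have "\<dots> = ennreal (4 * L * s * (P * c) * (8 ^ CARD('n) / 2 * c)) * HL_max (M_Omega \<Omega> f) x"
  proof -
    have "0 \<le> 4 * L * s" "0 \<le> P * c" "0 \<le> 8 ^ CARD('n) / 2 * c"
      using \<open>L \<ge> 0\<close> \<open>s > 0\<close> \<open>P \<ge> 0\<close> by (simp_all add: c_def)
    then have "ennreal (4 * L * s * (P * c) * (8 ^ CARD('n) / 2 * c))
        = ennreal (4 * L * s) * ennreal (P * c) * ennreal (8 ^ CARD('n) / 2 * c)"
      by (simp only: ennreal_mult mult_nonneg_nonneg)
    then show ?thesis by (simp only: mult.assoc)
  qed
  also have "4 * L * s * (P * c) * (8 ^ CARD('n) / 2 * c) = 2 * L * P * c\<^sup>2 * 8 ^ CARD('n) * s"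
    by (simp add: power2_eq_square)
  finally show ?thesis by (simp add: s_def c_def)
qed

lemma nn_integral_geometric_tail:
  fixes B :: real and j0 :: int
  shows "(\<integral>\<^sup>+ j. ennreal ((B * 2 powr real_of_int j)\<^sup>2) \<partial>count_space {..j0})
      \<le> ennreal ((2 * B * 2 powr real_of_int j0)\<^sup>2)"
proof -
  define a where "a = (B * 2 powr real_of_int j0)\<^sup>2"
  have "a \<ge> 0" by (simp add: a_def)
  have bij: "bij_betw (\<lambda>k::nat. j0 - int k) UNIV {..j0}"
    by (rule bij_betwI[where g="\<lambda>j. nat (j0 - j)"]) auto
  have term_eq: "(B * 2 powr real_of_int (j0 - int k))\<^sup>2 = a * (1/4)^k" for k :: nat
  proof -
    have shift: "2 powr real_of_int (j0 - int k) = 2 powr real_of_int j0 / 2^k"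
      by (simp add: powr_diff powr_realpow)
    have quarter: "(1/4::real)^k = 1 / (2^k)\<^sup>2"
    proof -
      have "(2::real)^k * 2^k = 4^k" by (simp flip: power_mult_distrib)
      then show ?thesis by (simp add: power_one_over power2_eq_square)
    qed
    show ?thesis unfolding shift a_def quarter by (simp add: power_divide power_mult_distrib)
  qed
  have "(\<integral>\<^sup>+ j. ennreal ((B * 2 powr real_of_int j)\<^sup>2) \<partial>count_space {..j0})
      = (\<integral>\<^sup>+ k. ennreal ((B * 2 powr real_of_int (j0 - int k))\<^sup>2) \<partial>count_space UNIV)"
    using nn_integral_bij_count_space[OF bij, of "\<lambda>j. ennreal ((B * 2 powr real_of_int j)\<^sup>2)"] by simp
  also have "\<dots> = (\<Sum>k. ennreal (a * (1/4)^k))"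
    unfolding nn_integral_count_space_nat term_eq ..
  also have "\<dots> = ennreal (\<Sum>k. a * (1/4)^k)"
    using \<open>a \<ge> 0\<close> by (intro suminf_ennreal2) (auto intro!: summable_mult summable_geometric)
  also have "(\<Sum>k. a * (1/4::real)^k) = a * (4/3)"
    using suminf_geometric[of "1/4::real"] by (simp add: suminf_mult)
  also have "ennreal (a * (4/3)) \<le> ennreal ((2 * B * 2 powr real_of_int j0)\<^sup>2)"
    using \<open>a \<ge> 0\<close> by (intro ennreal_leI) (simp add: a_def power_mult_distrib)
  finally show ?thesis .
qed

definition square_function :: "(real \<Rightarrow> int \<Rightarrow> real) \<Rightarrow> int set \<Rightarrow> ennreal" where
  "square_function F J = esqrt (\<integral>\<^sup>+ t \<in> {1..2}. (\<integral>\<^sup>+ j. ennreal ((F t j)\<^sup>2) \<partial>count_space J) \<partial>lborel)"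

lemma Mtilde_eq_square_function:
  "Mtilde \<Omega> \<phi> l J b f x = square_function (\<lambda>t j. Fljb \<Omega> \<phi> l j b f x t) J"
  by (simp add: Mtilde_def square_function_def)

lemma square_function_tail_le:
  fixes F :: "real \<Rightarrow> int \<Rightarrow> real"
  assumes bound: "\<And>t j. 1 \<le> t \<Longrightarrow> t \<le> 2 \<Longrightarrow> j \<le> j0 \<Longrightarrow> ennreal \<bar>F t j\<bar> \<le> ennreal (B * 2 powr real_of_int j) * H"
    and "B \<ge> 0"
  shows "(\<integral>\<^sup>+ t \<in> {1..2}. (\<integral>\<^sup>+ j. ennreal ((F t j)\<^sup>2) \<partial>count_space {..j0}) \<partial>lborel)
    \<le> (ennreal (2 * B * 2 powr real_of_int j0) * H)\<^sup>2"
proof -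
  have "(\<integral>\<^sup>+ j. ennreal ((F t j)\<^sup>2) \<partial>count_space {..j0}) \<le> (ennreal (2 * B * 2 powr real_of_int j0) * H)\<^sup>2"
    if t: "1 \<le> t" "t \<le> 2" for t
  proof -
    have "ennreal ((F t j)\<^sup>2) \<le> ennreal ((B * 2 powr real_of_int j)\<^sup>2) * H\<^sup>2" if "j \<le> j0" for j
    proof -
      have "ennreal ((F t j)\<^sup>2) = (ennreal \<bar>F t j\<bar>)\<^sup>2"
        by (simp add: ennreal_power)
      also have "\<dots> \<le> (ennreal (B * 2 powr real_of_int j) * H)\<^sup>2"
        using bound[OF t that] by (rule power_mono) simp
      finally show ?thesis
        using \<open>B \<ge> 0\<close> by (simp add: power_mult_distrib ennreal_power)
    qed
    then have "(\<integral>\<^sup>+ j. ennreal ((F t j)\<^sup>2) \<partial>count_space {..j0})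
        \<le> (\<integral>\<^sup>+ j. ennreal ((B * 2 powr real_of_int j)\<^sup>2) * H\<^sup>2 \<partial>count_space {..j0})"
      by (intro nn_integral_mono) auto
    also have "\<dots> = (\<integral>\<^sup>+ j. ennreal ((B * 2 powr real_of_int j)\<^sup>2) \<partial>count_space {..j0}) * H\<^sup>2"
      by (rule nn_integral_multc) simp
    also have "\<dots> \<le> ennreal ((2 * B * 2 powr real_of_int j0)\<^sup>2) * H\<^sup>2"
      by (intro mult_right_mono nn_integral_geometric_tail) simp
    also have "\<dots> = (ennreal (2 * B * 2 powr real_of_int j0) * H)\<^sup>2"
      using \<open>B \<ge> 0\<close> by (simp add: power_mult_distrib ennreal_power)
    finally show ?thesis .
  qed
  then have "(\<integral>\<^sup>+ t \<in> {1..2}. (\<integral>\<^sup>+ j. ennreal ((F t j)\<^sup>2) \<partial>count_space {..j0}) \<partial>lborel)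
      \<le> (\<integral>\<^sup>+ t. (ennreal (2 * B * 2 powr real_of_int j0) * H)\<^sup>2 * indicator {1..2::real} t \<partial>lborel)"
    by (intro nn_integral_mono) (simp add: indicator_def)
  also have "\<dots> = (ennreal (2 * B * 2 powr real_of_int j0) * H)\<^sup>2"
    by (simp add: nn_integral_cmult_indicator)
  finally show ?thesis .
qed

lemma square_function_truncation:
  fixes F :: "real \<Rightarrow> int \<Rightarrow> real"
  assumes meas: "\<And>j. (\<lambda>t. F t j) \<in> borel_measurable borel"
    and bound: "\<And>t j. 1 \<le> t \<Longrightarrow> t \<le> 2 \<Longrightarrow> j \<le> j0 \<Longrightarrow> ennreal \<bar>F t j\<bar> \<le> ennreal (B * 2 powr real_of_int j) * H"
    and "B \<ge> 0"
  shows "square_function F {j0<..} \<le> square_function F UNIV + ennreal (2 * B * 2 powr real_of_int j0) * H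
    \<and> square_function F UNIV \<le> square_function F {j0<..} + ennreal (2 * B * 2 powr real_of_int j0) * H"
proof -
  define A where "A J t = (\<integral>\<^sup>+ j. ennreal ((F t j)\<^sup>2) \<partial>count_space J)" for J t
  have [measurable]: "(\<lambda>t. A J t) \<in> borel_measurable borel" for J
    unfolding A_def using meas by (intro borel_measurable_nn_integral_count_space) measurable
  have "A UNIV t = A {j0<..} t + A {..j0} t" for t
    unfolding A_def by (simp add: nn_integral_count_space_split[of _ "{j0<..}"])
  then have split: "(\<integral>\<^sup>+ t \<in> {1..2}. A UNIV t \<partial>lborel)
      = (\<integral>\<^sup>+ t \<in> {1..2}. A {j0<..} t \<partial>lborel) + (\<integral>\<^sup>+ t \<in> {1..2}. A {..j0} t \<partial>lborel)"
    by (simp add: distrib_right nn_integral_add)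
  have "square_function F J = esqrt (\<integral>\<^sup>+ t \<in> {1..2}. A J t \<partial>lborel)" for J
    by (simp add: square_function_def A_def)
  moreover have "(\<integral>\<^sup>+ t \<in> {1..2}. A {..j0} t \<partial>lborel) \<le> (ennreal (2 * B * 2 powr real_of_int j0) * H)\<^sup>2"
    unfolding A_def using bound \<open>B \<ge> 0\<close> by (rule square_function_tail_le)
  ultimately show ?thesis
    using split by (auto intro: order_trans[OF esqrt_mono] esqrt_add_le add_left_mono)
qed

theorem lemma3p2:
  fixes \<Omega> b \<phi> :: "real^'n \<Rightarrow> real"
  assumes n2: "CARD('n) \<ge> 2"
    and hom: "\<And>s x. s > 0 \<Longrightarrow> \<Omega> (s *\<^sub>R x) = \<Omega> x"
    and int: "integrable sphere_measure \<Omega>"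
    and b: "C0_infty b"
    and phi_nn: "\<And>x. \<phi> x \<ge> 0"
    and phi_sm: "C0_infty \<phi>"
    and phi_int: "(LINT x|lborel. \<phi> x) = 1"
    and phi_supp: "{x. \<phi> x \<noteq> 0} \<subseteq> cball 0 (1/4)"
  shows "\<exists>C::real. \<forall>(l::nat) (j0::int) (f::real^'n \<Rightarrow> real) x.
           j0 < 0 \<longrightarrow> (\<forall>K. compact K \<longrightarrow> set_integrable lborel K f) \<longrightarrow>
             Mtilde \<Omega> \<phi> l {j0<..} b f x
               \<le> Mtilde \<Omega> \<phi> l UNIV b f x + ennreal (C * 2 powr real_of_int j0) * HL_max (M_Omega \<Omega> f) x
           \<and> Mtilde \<Omega> \<phi> l UNIV b f x
               \<le> Mtilde \<Omega> \<phi> l {j0<..} b f x + ennreal (C * 2 powr real_of_int j0) * HL_max (M_Omega \<Omega> f) x"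
proof -
  obtain L where "L \<ge> 0" and Lip: "\<And>x y. \<bar>b x - b y\<bar> \<le> L * norm (x - y)"
    using C0_infty_lipschitz[OF b] by blast
  obtain P where "P \<ge> 0" and phi_le: "\<And>x. \<phi> x \<le> P"
    using C0_infty_bounded[OF phi_sm] abs_le_D1 by blast
  have [measurable]: "\<Omega> \<in> borel_measurable borel" "\<phi> \<in> borel_measurable borel" "b \<in> borel_measurable borel"
    using borel_measurable_if_integrable_sphere_measure[OF int]
      borel_measurable_continuous_onI[OF C0_infty_continuous] phi_sm b by auto
  define B where "B = 2 * L * P * (measure lborel (ball (0::real^'n) 1))\<^sup>2 * 8 ^ CARD('n)"
  have "B \<ge> 0" using \<open>L \<ge> 0\<close> \<open>P \<ge> 0\<close> by (simp add: B_def)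
  show ?thesis
  proof (intro exI[of _ "2 * B"] allI impI)
    fix l :: nat and j0 :: int and f :: "real^'n \<Rightarrow> real" and x :: "real^'n"
    assume "\<forall>K. compact K \<longrightarrow> set_integrable lborel K f"
    then have [measurable]: "f \<in> borel_measurable borel"
      by (intro borel_measurable_if_locally_integrable) blast
    show "Mtilde \<Omega> \<phi> l {j0<..} b f x
          \<le> Mtilde \<Omega> \<phi> l UNIV b f x + ennreal (2 * B * 2 powr real_of_int j0) * HL_max (M_Omega \<Omega> f) x
        \<and> Mtilde \<Omega> \<phi> l UNIV b f x
          \<le> Mtilde \<Omega> \<phi> l {j0<..} b f x + ennreal (2 * B * 2 powr real_of_int j0) * HL_max (M_Omega \<Omega> f) x"
      unfolding Mtilde_eq_square_function
      using Fljb_le_HL_max_M_Omega[OF _ _ _ _ phi_nn phi_le phi_supp Lip \<open>L \<ge> 0\<close>]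
      by (intro square_function_truncation borel_measurable_Fljb \<open>B \<ge> 0\<close>) (auto simp: B_def)
  qed
qed

end
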